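(* Let $(R,\mathfrak{m})$ be a Noetherian local ring of prime characteristic $p>0$ and $I$ an ideal of $R$. Then $$0^{F_R}_{H^0_{\mathfrak{m}}(R/I)}=\big(I^F\cap (I:_R\mathfrak{m}^{\infty})\big)/I.$$
   Context: For an ideal $K$ of $R$ and $e\ge0$, $K^{[p^e]}=(x^{p^e}\mid x\in K)$, and $I^F=\{x\in R\mid x^{p^e}\in I^{[p^e]}\text{ for some }e\ge0\}$ is the Frobenius closure. The map $F^e_R:R/K\to R/K^{[p^e]}$, $a+K\mapsto a^{p^e}+K^{[p^e]}$, induces (via Čech complexes) the relative Frobenius maps $F^e_R:H^i_{\mathfrak{m}}(R/K)\to H^i_{\mathfrak{m}}(R/K^{[p^e]})$. The relative Frobenius closure of zero is $0^{F_R}_{H^i_{\mathfrak{m}}(R/K)}=\{\eta\in H^i_{\mathfrak{m}}(R/K)\mid F^e_R(\eta)=0\in H^i_{\mathfrak{m}}(R/K^{[p^e]})\text{ for some }e\ge0\}$. Here $H^0_{\mathfrak{m}}(R/I)$ is identified with $(I:_R\mathfrak{m}^\infty)/I$. *)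

theory Defs
  imports "HOL-Algebra.Ideal_Product" "HOL-Algebra.Ring_Divisibility" "HOL-Algebra.QuotRing" "HOL-Computational_Algebra.Primes"
begin

definition local_ring :: "('a, 'b) ring_scheme \<Rightarrow> 'a set \<Rightarrow> bool" where
  "local_ring R m \<longleftrightarrow> cring R \<and> maximalideal m R \<and> (\<forall>J. maximalideal J R \<longrightarrow> J = m)"

definition has_prime_char :: "('a, 'b) ring_scheme \<Rightarrow> nat \<Rightarrow> bool" where
  "has_prime_char R p \<longleftrightarrow> normalization_semidom_class.prime p \<and> \<one>\<^bsub>R\<^esub> \<noteq> \<zero>\<^bsub>R\<^esub> \<and> add_pow R p \<one>\<^bsub>R\<^esub> = \<zero>\<^bsub>R\<^esub>"

definition frob_pow :: "('a, 'b) ring_scheme \<Rightarrow> nat \<Rightarrow> nat \<Rightarrow> 'a set \<Rightarrow> 'a set" where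
  "frob_pow R p e K = Idl\<^bsub>R\<^esub> {x [^]\<^bsub>R\<^esub> (p ^ e) | x. x \<in> K}"

definition frob_closure :: "('a, 'b) ring_scheme \<Rightarrow> nat \<Rightarrow> 'a set \<Rightarrow> 'a set" where
  "frob_closure R p I = {x \<in> carrier R. \<exists>e. x [^]\<^bsub>R\<^esub> (p ^ e) \<in> frob_pow R p e I}"

definition ideal_colon :: "('a, 'b) ring_scheme \<Rightarrow> 'a set \<Rightarrow> 'a set \<Rightarrow> 'a set" where
  "ideal_colon R I J = {x \<in> carrier R. \<forall>j \<in> J. x \<otimes>\<^bsub>R\<^esub> j \<in> I}"

definition saturation :: "('a, 'b) ring_scheme \<Rightarrow> 'a set \<Rightarrow> 'a set \<Rightarrow> 'a set" where
  "saturation R I m = (\<Union>n. ideal_colon R I (m [^]\<^bsub>ideals_set R\<^esub> (n::nat)))"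

text \<open>H^0_m(R/I), identified with (I :_R m^\<infinity>)/I, as a set of cosets a + I in R/I.\<close>
definition H0 :: "('a, 'b) ring_scheme \<Rightarrow> 'a set \<Rightarrow> 'a set \<Rightarrow> 'a set set" where
  "H0 R m I = {I +>\<^bsub>R\<^esub> a | a. a \<in> saturation R I m}"

text \<open>Relative Frobenius F^e_R : R/K \<rightarrow> R/K^[p^e], a + K \<mapsto> a^(p^e) + K^[p^e]
  (evaluated on a chosen representative; it is well defined).\<close>
definition rel_frob :: "('a, 'b) ring_scheme \<Rightarrow> nat \<Rightarrow> nat \<Rightarrow> 'a set \<Rightarrow> 'a set \<Rightarrow> 'a set" where
  "rel_frob R p e K \<eta> =
     frob_pow R p e K +>\<^bsub>R\<^esub> ((SOME a. a \<in> carrier R \<and> \<eta> = K +>\<^bsub>R\<^esub> a) [^]\<^bsub>R\<^esub> (p ^ e))"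

definition rel_frob_closure_zero_H0 :: "('a, 'b) ring_scheme \<Rightarrow> nat \<Rightarrow> 'a set \<Rightarrow> 'a set \<Rightarrow> 'a set set" where
  "rel_frob_closure_zero_H0 R p m K =
     {\<eta> \<in> H0 R m K. \<exists>e. rel_frob R p e K \<eta> = \<zero>\<^bsub>R Quot (frob_pow R p e K)\<^esub>}"

end

theory Submission
  imports Defs
begin

text \<open>In characteristic p the map a \<mapsto> a^(p^e) is additive, so it sends a + I to the
  well-defined coset a^(p^e) + I^[p^e] whatever representative is chosen, and that coset is zero
  iff a^(p^e) \<in> I^[p^e]. Hence a class a + I of H^0_m(R/I) dies under some relative Frobenius
  iff a \<in> I^F.\<close>

lemma (in cring) binomial_ring:
  assumes x: "x \<in> carrier R" and y: "y \<in> carrier R"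
  shows "(x \<oplus> y) [^] n = (\<Oplus>k\<in>{..n}. add_pow R (n choose k) (x [^] k \<otimes> y [^] (n - k)))"
proof (induction n)
  case 0
  then show ?case using x y by simp
next
  case (Suc n)
  define S where "S = (\<Oplus>k\<in>{..n}. add_pow R (n choose k) (x [^] k \<otimes> y [^] (n - k)))"
  define T where "T = (\<Oplus>k\<in>{..n}. add_pow R (n choose Suc k) (x [^] Suc k \<otimes> y [^] (n - k)))"
  have S: "S \<in> carrier R" and T: "T \<in> carrier R"
    unfolding S_def T_def using x y by auto
  have Sx: "S \<otimes> x = (\<Oplus>k\<in>{..n}. add_pow R (n choose k) (x [^] Suc k \<otimes> y [^] (n - k)))"
    unfolding S_def using x y
    by (simp add: finsum_rdistr add_pow_rdistr nat_pow_Suc m_ac)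
  have Sy: "S \<otimes> y = (\<Oplus>k\<in>{..Suc n}. add_pow R (n choose k) (x [^] k \<otimes> y [^] (Suc n - k)))"
  proof -
    have "S \<otimes> y = (\<Oplus>k\<in>{..n}. add_pow R (n choose k) (x [^] k \<otimes> y [^] (Suc n - k)))"
      unfolding S_def using x y
      by (simp add: finsum_ldistr add_pow_ldistr m_assoc)
        (auto simp: Suc_diff_le nat_pow_Suc intro!: finsum_cong')
    then show ?thesis
      using x y by (simp add: finsum_Suc binomial_eq_0)
  qed
  have "(\<Oplus>k\<in>{..Suc n}. add_pow R (Suc n choose k) (x [^] k \<otimes> y [^] (Suc n - k)))
      = (\<Oplus>k\<in>{..n}. add_pow R (Suc n choose Suc k) (x [^] Suc k \<otimes> y [^] (n - k))) \<oplus> y [^] Suc n"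
    using x y by (subst finsum_Suc2) auto
  also have "\<dots> = (S \<otimes> x \<oplus> T) \<oplus> y [^] Suc n"
  proof -
    have "(\<Oplus>k\<in>{..n}. add_pow R (Suc n choose Suc k) (x [^] Suc k \<otimes> y [^] (n - k)))
        = (\<Oplus>k\<in>{..n}. add_pow R (n choose k) (x [^] Suc k \<otimes> y [^] (n - k))
                        \<oplus> add_pow R (n choose Suc k) (x [^] Suc k \<otimes> y [^] (n - k)))"
      using x y by (intro finsum_cong') (auto simp: add.nat_pow_mult)
    then show ?thesis
      unfolding Sx T_def using x y by (simp add: finsum_addf)
  qed
  also have "\<dots> = S \<otimes> x \<oplus> (T \<oplus> y [^] Suc n)"
    using S T x y by (simp add: a_assoc)
  also have "\<dots> = S \<otimes> x \<oplus> S \<otimes> y"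
    unfolding Sy T_def
    using finsum_Suc2[of "\<lambda>k. add_pow R (n choose k) (x [^] k \<otimes> y [^] (Suc n - k))" n] x y
    by simp
  also have "\<dots> = (x \<oplus> y) [^] Suc n"
    using Suc x y S by (simp add: S_def r_distr)
  finally show ?case by (rule sym)
qed

lemma (in ring) frob_pow_ideal: "K \<subseteq> carrier R \<Longrightarrow> ideal (frob_pow R p e K) R"
  unfolding frob_pow_def by (rule genideal_ideal) auto

lemma (in ring) pow_mem_frob_pow:
  "K \<subseteq> carrier R \<Longrightarrow> a \<in> K \<Longrightarrow> a [^] (p ^ e) \<in> frob_pow R p e K"
  unfolding frob_pow_def by (rule genideal_self[THEN subsetD]) auto

locale char_p_cring = cring +
  fixes p :: nat
  assumes prime_p: "prime p"
    and add_pow_char_one: "add_pow R p \<one> = \<zero>"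
begin

lemma add_pow_char_mult_eq_zero:
  assumes a: "a \<in> carrier R"
  shows "add_pow R (p * c) a = \<zero>"
proof -
  have "add_pow R p a = add_pow R p \<one> \<otimes> a"
    using add_pow_ldistr[of \<one> a p] a by simp
  then have "add_pow R p a = \<zero>"
    using add_pow_char_one a by simp
  then show ?thesis
    using add.nat_pow_pow[OF a, of c p] a by simp
qed

lemma pow_char_add:
  assumes x: "x \<in> carrier R" and y: "y \<in> carrier R"
  shows "(x \<oplus> y) [^] p = x [^] p \<oplus> y [^] p"
proof -
  define f where "f k = add_pow R (p choose k) (x [^] k \<otimes> y [^] (p - k))" for k
  have f: "f \<in> A \<rightarrow> carrier R" for A
    unfolding f_def using x y by auto
  have "f k = \<zero>" if "0 < k" "k < p" for k
  proof -
    have "p dvd p choose k"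
      using dvd_choose_prime[of k p] that prime_p by simp
    then obtain c where "p choose k = p * c"
      by (rule dvdE)
    then show ?thesis
      unfolding f_def using add_pow_char_mult_eq_zero x y by simp
  qed
  then have "finsum R f {..p} = finsum R f {0, p}"
    using f by (intro add.finprod_mono_neutral_cong_right) auto
  also have "\<dots> = x [^] p \<oplus> y [^] p"
    using prime_gt_0_nat[OF prime_p] x y by (simp add: f_def a_comm)
  finally show ?thesis
    unfolding f_def using binomial_ring[OF x y] by simp
qed

lemma pow_char_power_add:
  assumes x: "x \<in> carrier R" and y: "y \<in> carrier R"
  shows "(x \<oplus> y) [^] (p ^ e) = x [^] (p ^ e) \<oplus> y [^] (p ^ e)"
proof (induction e)
  case 0
  then show ?case using x y by simp
next
  case (Suc e)
  have "(x \<oplus> y) [^] (p ^ Suc e) = ((x \<oplus> y) [^] (p ^ e)) [^] p"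
    using x y by (simp add: nat_pow_pow mult.commute)
  also have "\<dots> = (x [^] (p ^ e)) [^] p \<oplus> (y [^] (p ^ e)) [^] p"
    unfolding Suc using x y by (simp add: pow_char_add)
  also have "\<dots> = x [^] (p ^ Suc e) \<oplus> y [^] (p ^ Suc e)"
    using x y by (simp add: nat_pow_pow mult.commute)
  finally show ?case .
qed

lemma pow_char_power_diff:
  assumes a: "a \<in> carrier R" and b: "b \<in> carrier R"
  shows "(a \<ominus> b) [^] (p ^ e) = a [^] (p ^ e) \<ominus> b [^] (p ^ e)"
proof -
  have "a [^] (p ^ e) = (a \<ominus> b \<oplus> b) [^] (p ^ e)"
    using a b by (simp add: a_minus_def a_assoc l_neg)
  also have "\<dots> = (a \<ominus> b) [^] (p ^ e) \<oplus> b [^] (p ^ e)"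
    using a b by (simp add: pow_char_power_add)
  finally show ?thesis
    using a b by (simp add: a_minus_def a_assoc r_neg)
qed

lemma rel_frob_rcos:
  assumes I: "ideal I R" and a: "a \<in> carrier R"
  shows "rel_frob R p e I (I +> a) = frob_pow R p e I +> a [^] (p ^ e)"
proof -
  have IR: "I \<subseteq> carrier R"
    using ideal.Icarr[OF I] by blast
  define b where "b = (SOME b. b \<in> carrier R \<and> I +> a = I +> b)"
  have "b \<in> carrier R \<and> I +> a = I +> b"
    unfolding b_def by (rule someI[of _ a]) (use a in simp)
  then have b: "b \<in> carrier R" "I +> a = I +> b"
    by blast+
  then have "b \<ominus> a \<in> I"
    using quotient_eq_iff_same_a_r_cos[OF I b(1) a] by simp
  then have "b [^] (p ^ e) \<ominus> a [^] (p ^ e) \<in> frob_pow R p e I"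
    using pow_mem_frob_pow[OF IR] pow_char_power_diff[OF b(1) a] by metis
  then show ?thesis
    unfolding rel_frob_def b_def[symmetric]
    using quotient_eq_iff_same_a_r_cos[OF frob_pow_ideal[OF IR]] a b by simp
qed

lemma rel_frob_rcos_eq_zero_iff:
  assumes I: "ideal I R" and a: "a \<in> carrier R"
  shows "rel_frob R p e I (I +> a) = \<zero>\<^bsub>R Quot frob_pow R p e I\<^esub>
     \<longleftrightarrow> a [^] (p ^ e) \<in> frob_pow R p e I"
proof -
  have J: "ideal (frob_pow R p e I) R"
    using frob_pow_ideal ideal.Icarr[OF I] by blast
  show ?thesis
    unfolding rel_frob_rcos[OF assms] FactRing_def
    using a_rcos_zero[OF J] ideal.rcos_const_imp_mem[OF J] a by auto
qed

end

theorem lemma2p9: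
  fixes R :: "('a, 'b) ring_scheme" and m I :: "'a set" and p :: nat
  assumes "noetherian_ring R"
    and "local_ring R m"
    and "has_prime_char R p"
    and "ideal I R"
  shows "rel_frob_closure_zero_H0 R p m I
           = {I +>\<^bsub>R\<^esub> a | a. a \<in> frob_closure R p I \<inter> saturation R I m}"
proof -
  interpret char_p_cring R p
    using assms(2,3) unfolding local_ring_def has_prime_char_def
    by (intro char_p_cring.intro char_p_cring_axioms.intro) auto
  have "saturation R I m \<subseteq> carrier R"
    unfolding saturation_def ideal_colon_def by auto
  then show ?thesis
    unfolding rel_frob_closure_zero_H0_def H0_def frob_closure_def
    using rel_frob_rcos_eq_zero_iff[OF assms(4)] by blast
qed

end
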